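(* Let $k\ge3$, and let $\mathcal P=\{p_1,\dots,p_{k^2}\}$ be a family of real polynomials in the commuting variables $x_1,\dots,x_{2k^2}$ admitting an nc representation $p(X,Y)$ of degree $d>1$. Let $t\ge2$ and $s\in\{t,t+1\}$, and let $e\ne0$. Suppose that, counting over all polynomials of the family, there are exactly $k$ terms $e\,x_{i_1}^sx_{j_1}^t,\dots,e\,x_{i_k}^sx_{j_k}^t$ with $x_{i_n}\ne x_{j_n}$ (i.e. exactly $k$ two letter terms with coefficient $e$ whose exponents are $s$ and $t$). Then for each $n$, one of $x_{i_n},x_{j_n}$ is a diagonal entry of $X$ and the other is the diagonal entry of $Y$ in the same position; and if $p_{\ell_n}$ is the polynomial containing $e\,x_{i_n}^sx_{j_n}^t$, then $p_{\ell_n}$ occupies that same diagonal position in the array $p(X,Y)$.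
   Context: The family $\mathcal P$ admits an nc representation $p(X,Y)$ if there are $k\times k$ matrices $X,Y$ whose $2k^2$ entries are the variables $x_1,\dots,x_{2k^2}$, each used exactly once, and a noncommutative polynomial $p$ in two letters with real coefficients such that the matrix $p(X,Y)$ is a $k\times k$ array whose entries are $p_1,\dots,p_{k^2}$, each exactly once. A "term" means a monomial with its nonzero coefficient after collecting like terms. *)

theory Defs
  imports Complex_Main "HOL-Library.Multiset"
begin

text \<open>Noncommutative polynomials in two letters: words over bool
  (False = letter X, True = letter Y) with real coefficients, finitely supported.
  Commutative polynomials in variables x_0, x_1, ...: coefficient functions
  on monomials, a monomial being a multiset of variable indices.\<close>

type_synonym ncpoly = "bool list \<Rightarrow> real"
type_synonym cpoly = "nat multiset \<Rightarrow> real"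

definition nc_finite :: "ncpoly \<Rightarrow> bool" where
  "nc_finite c \<longleftrightarrow> finite {w. c w \<noteq> 0}"

definition nc_degree :: "ncpoly \<Rightarrow> nat" where
  "nc_degree c = Max (length ` {w. c w \<noteq> 0})"

text \<open>The variable matrices: entry (i,j) of X is variable v False i j, of Y is v True i j.
  v must be a bijection from letters \<times> positions onto the 2k^2 variable indices.\<close>

definition var_assignment :: "nat \<Rightarrow> (bool \<Rightarrow> nat \<Rightarrow> nat \<Rightarrow> nat) \<Rightarrow> bool" where
  "var_assignment k v \<longleftrightarrow>
     bij_betw (\<lambda>(a, i, j). v a i j) (UNIV \<times> {..<k} \<times> {..<k}) {..<2 * k^2}"

text \<open>Index paths through the matrix product for word w from i to j, and the monomial
  such a path produces.\<close>

definition path_monomial :: "(bool \<Rightarrow> nat \<Rightarrow> nat \<Rightarrow> nat) \<Rightarrow> bool list \<Rightarrow> nat list \<Rightarrow> nat multiset" where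
  "path_monomial v w ps = mset (map (\<lambda>r. v (w ! r) (ps ! r) (ps ! Suc r)) [0..<length w])"

definition word_paths :: "nat \<Rightarrow> bool list \<Rightarrow> nat \<Rightarrow> nat \<Rightarrow> nat list set" where
  "word_paths k w i j = {ps. length ps = Suc (length w) \<and> set ps \<subseteq> {..<k}
                             \<and> hd ps = i \<and> last ps = j}"

text \<open>Coefficient of monomial \<mu> in entry (i,j) of the matrix p(X,Y).\<close>

definition nc_entry :: "nat \<Rightarrow> (bool \<Rightarrow> nat \<Rightarrow> nat \<Rightarrow> nat) \<Rightarrow> ncpoly \<Rightarrow> nat \<Rightarrow> nat \<Rightarrow> cpoly" where
  "nc_entry k v c i j \<mu> =
     (\<Sum>w\<in>{w. c w \<noteq> 0}. c w * real (card {ps \<in> word_paths k w i j. path_monomial v w ps = \<mu>}))"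

text \<open>The family P (indexed by 0..<k^2, as functions from monomials over variables
  0..<2k^2 to coefficients) admits the nc representation p(X,Y) via variable assignment v,
  with \<sigma> assigning to each matrix position the index of the family member found there.\<close>

definition nc_representation ::
  "nat \<Rightarrow> (nat \<Rightarrow> cpoly) \<Rightarrow> ncpoly \<Rightarrow> (bool \<Rightarrow> nat \<Rightarrow> nat \<Rightarrow> nat) \<Rightarrow> (nat \<times> nat \<Rightarrow> nat) \<Rightarrow> bool" where
  "nc_representation k P c v \<sigma> \<longleftrightarrow>
     nc_finite c \<and> var_assignment k v \<and>
     bij_betw \<sigma> ({..<k} \<times> {..<k}) {..<k^2} \<and>
     (\<forall>i<k. \<forall>j<k. P (\<sigma> (i, j)) = nc_entry k v c i j)"

definition two_letter :: "nat \<Rightarrow> nat \<Rightarrow> nat \<Rightarrow> nat \<Rightarrow> nat multiset" where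
  "two_letter s t i j = replicate_mset s i + replicate_mset t j"

end

theory Submission
  imports Defs "HOL-Combinatorics.Permutations"
begin

text \<open>Conjugating X and Y by the permutation matrix of a permutation \<pi> of the indices
  relabels the variables and moves entry (a, b) of p(X, Y) to (\<pi> a, \<pi> b) without changing
  coefficients, so the two-letter terms with coefficient e come in orbits. A term
  x_i^s x_j^t of entry (a, b) comes from an index path from a to b whose edges are all
  x_i or x_j. If a \<noteq> b, the orbit of the term meets all k^2 - k > k off-diagonal entries.
  If a = b and the path leaves a, then x_i, x_j are a variable in row a and one in column a,
  both off the diagonal, and the relabelled term remembers both \<pi> a and where \<pi> sends the
  departure index, which again yields k^2 - k distinct terms. So the path stays at a, and
  x_i, x_j are the (a, a) entries of X and Y.\<close>

lemma permutes_two_points: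
  assumes "a \<in> S" "b \<in> S" "a \<noteq> b" "a' \<in> S" "b' \<in> S" "a' \<noteq> b'"
  obtains \<pi> where "\<pi> permutes S" "\<pi> a = a'" "\<pi> b = b'"
proof
  let ?\<tau> = "transpose a a'"
  show "transpose (?\<tau> b) b' \<circ> ?\<tau> permutes S"
    using assms by (intro permutes_compose permutes_swap_id) (auto simp: transpose_def)
  show "(transpose (?\<tau> b) b' \<circ> ?\<tau>) a = a'" "(transpose (?\<tau> b) b' \<circ> ?\<tau>) b = b'"
    using assms by (auto simp: transpose_def)
qed

lemma list_departure:
  "hd xs = a \<Longrightarrow> x \<in> set xs \<Longrightarrow> x \<noteq> a \<Longrightarrow> \<exists>n. Suc n < length xs \<and> xs ! n = a \<and> xs ! Suc n \<noteq> a"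
proof (induction xs)
  case Nil
  then show ?case by simp
next
  case (Cons y ys)
  then have "x \<in> set ys" "ys \<noteq> []" by auto
  show ?case
  proof (cases "hd ys = a")
    case True
    with Cons.IH \<open>x \<in> set ys\<close> \<open>x \<noteq> a\<close> obtain n where "Suc n < length ys" "ys ! n = a" "ys ! Suc n \<noteq> a"
      by blast
    then show ?thesis by (intro exI[of _ "Suc n"]) simp
  next
    case False
    then show ?thesis using Cons.prems \<open>ys \<noteq> []\<close> by (intro exI[of _ 0]) (simp add: hd_conv_nth)
  qed
qed

lemma list_arrival:
  assumes "last xs = a" "x \<in> set xs" "x \<noteq> a"
  shows "\<exists>n. Suc n < length xs \<and> xs ! n \<noteq> a \<and> xs ! Suc n = a"
proof -
  have "hd (rev xs) = a" using assms(1,2) by (auto simp: hd_rev)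
  with assms(2,3) obtain n where n: "Suc n < length xs" "rev xs ! n = a" "rev xs ! Suc n \<noteq> a"
    using list_departure[of "rev xs"] by fastforce
  then show ?thesis
    by (intro exI[of _ "length xs - Suc (Suc n)"]) (auto simp: rev_nth Suc_diff_Suc)
qed

lemma doubleton_eq_of_mem: "x \<in> {i, j} \<Longrightarrow> y \<in> {i, j} \<Longrightarrow> x \<noteq> y \<Longrightarrow> {i, j} = {x, y}"
  by auto

lemma var_assignment_eq_iff:
  assumes "var_assignment k v" "p < k" "q < k" "p' < k" "q' < k"
  shows "v a p q = v b p' q' \<longleftrightarrow> a = b \<and> p = p' \<and> q = q'"
proof -
  have "inj_on (\<lambda>(a, i, j). v a i j) (UNIV \<times> {..<k} \<times> {..<k})"
    using assms(1) unfolding var_assignment_def by (rule bij_betw_imp_inj_on)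
  from inj_onD[OF this, of "(a, p, q)" "(b, p', q')"] assms(2-) show ?thesis by auto
qed

lemma var_assignment_less:
  assumes "var_assignment k v" "p < k" "q < k"
  shows "v a p q < 2 * k^2"
proof -
  have "v a p q \<in> (\<lambda>(a, i, j). v a i j) ` (UNIV \<times> {..<k} \<times> {..<k})"
    using assms(2,3) by (intro image_eqI[of _ _ "(a, p, q)"]) auto
  with assms(1) show ?thesis unfolding var_assignment_def bij_betw_def by simp
qed

lemma var_assignment_obtain:
  assumes "var_assignment k v" "x < 2 * k^2"
  obtains a p q where "p < k" "q < k" "x = v a p q"
proof -
  from assms have "x \<in> (\<lambda>(a, i, j). v a i j) ` (UNIV \<times> {..<k} \<times> {..<k})"
    unfolding var_assignment_def bij_betw_def by simp
  then show ?thesis using that by auto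
qed

text \<open>The variable substitution induced by conjugation with \<pi>; numbers that are not
  variables are fixed, so that it is a bijection whenever \<pi> permutes the indices.\<close>

definition var_relabel :: "nat \<Rightarrow> (bool \<Rightarrow> nat \<Rightarrow> nat \<Rightarrow> nat) \<Rightarrow> (nat \<Rightarrow> nat) \<Rightarrow> nat \<Rightarrow> nat" where
  "var_relabel k v \<pi> x =
     (if x < 2 * k^2 then
        case the_inv_into (UNIV \<times> {..<k} \<times> {..<k}) (\<lambda>(a, i, j). v a i j) x of
          (a, i, j) \<Rightarrow> v a (\<pi> i) (\<pi> j)
      else x)"

lemma var_relabel_var:
  assumes "var_assignment k v" "p < k" "q < k"
  shows "var_relabel k v \<pi> (v a p q) = v a (\<pi> p) (\<pi> q)"
proof -
  have "the_inv_into (UNIV \<times> {..<k} \<times> {..<k}) (\<lambda>(a, i, j). v a i j) (v a p q) = (a, p, q)"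
    using assms the_inv_into_f_f[of "\<lambda>(a, i, j). v a i j" "UNIV \<times> {..<k} \<times> {..<k}" "(a, p, q)"]
    unfolding var_assignment_def by (auto dest: bij_betw_imp_inj_on)
  then show ?thesis using var_assignment_less[OF assms] unfolding var_relabel_def by simp
qed

lemma var_relabel_inv:
  assumes "var_assignment k v" "\<pi> permutes {..<k}"
  shows "var_relabel k v (inv \<pi>) (var_relabel k v \<pi> x) = x"
proof (cases "x < 2 * k^2")
  case True
  obtain a p q where pq: "p < k" "q < k" and x: "x = v a p q"
    by (rule var_assignment_obtain[OF assms(1) True])
  moreover have "\<pi> p < k" "\<pi> q < k"
    using pq permutes_in_image[OF assms(2)] by auto
  ultimately show ?thesis
    by (simp add: var_relabel_var[OF assms(1)] permutes_inverses[OF assms(2)])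
qed (simp add: var_relabel_def)

lemma image_mset_var_relabel_inv:
  assumes "var_assignment k v" "\<pi> permutes {..<k}"
  shows "image_mset (var_relabel k v (inv \<pi>)) (image_mset (var_relabel k v \<pi>) \<mu>) = \<mu>"
  by (simp add: multiset.map_comp o_def var_relabel_inv[OF assms])

lemma word_paths_permute:
  assumes "\<pi> permutes {..<k}" "ps \<in> word_paths k w a b"
  shows "map \<pi> ps \<in> word_paths k w (\<pi> a) (\<pi> b)"
proof -
  have "ps \<noteq> []" using assms(2) unfolding word_paths_def by auto
  with assms show ?thesis
    unfolding word_paths_def by (auto simp: hd_map last_map permutes_in_image[OF assms(1)] simp flip: lessThan_iff)
qed

lemma word_paths_nth_less:
  assumes "ps \<in> word_paths k w a b" "n \<le> length w"
  shows "ps ! n < k"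
proof -
  have "n < length ps" using assms unfolding word_paths_def by simp
  then have "ps ! n \<in> set ps" by (rule nth_mem)
  with assms(1) show ?thesis unfolding word_paths_def by auto
qed

lemma path_monomial_permute:
  assumes "var_assignment k v" "\<pi> permutes {..<k}" "ps \<in> word_paths k w a b"
  shows "path_monomial v w (map \<pi> ps) = image_mset (var_relabel k v \<pi>) (path_monomial v w ps)"
  using assms(3) word_paths_nth_less[OF assms(3)] unfolding path_monomial_def word_paths_def
  by (auto simp: var_relabel_var[OF assms(1)] multiset.map_comp o_def intro!: image_mset_cong)

lemma monomial_paths_permute:
  assumes "var_assignment k v" "\<pi> permutes {..<k}"
  shows "{ps \<in> word_paths k w (\<pi> a) (\<pi> b). path_monomial v w ps = image_mset (var_relabel k v \<pi>) \<mu>}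
       = map \<pi> ` {ps \<in> word_paths k w a b. path_monomial v w ps = \<mu>}"
    (is "?B = map \<pi> ` ?A")
proof
  show "map \<pi> ` ?A \<subseteq> ?B"
    using word_paths_permute[OF assms(2)] path_monomial_permute[OF assms] by auto
  show "?B \<subseteq> map \<pi> ` ?A"
  proof
    fix ps assume ps: "ps \<in> ?B"
    have inv: "inv \<pi> permutes {..<k}" using assms(2) by (rule permutes_inv)
    have "map (inv \<pi>) ps \<in> word_paths k w a b"
      using word_paths_permute[OF inv, of ps w "\<pi> a" "\<pi> b"] ps by (simp add: permutes_inverses[OF assms(2)])
    moreover have "path_monomial v w (map (inv \<pi>) ps) = \<mu>"
      using path_monomial_permute[OF assms(1) inv, of ps w "\<pi> a" "\<pi> b"] ps image_mset_var_relabel_inv[OF assms] by simp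
    moreover have "ps = map \<pi> (map (inv \<pi>) ps)"
      by (simp add: permutes_inv_o[OF assms(2)])
    ultimately show "ps \<in> map \<pi> ` ?A" by blast
  qed
qed

lemma nc_entry_permute:
  assumes "var_assignment k v" "\<pi> permutes {..<k}"
  shows "nc_entry k v c (\<pi> a) (\<pi> b) (image_mset (var_relabel k v \<pi>) \<mu>) = nc_entry k v c a b \<mu>"
proof -
  have "inj_on (map \<pi>) A" for A :: "nat list set"
    using inj_mapI[OF permutes_inj[OF assms(2)]] by (rule inj_on_subset) simp
  then show ?thesis
    unfolding nc_entry_def monomial_paths_permute[OF assms] by (simp add: card_image)
qed

lemma set_mset_path_monomial:
  "set_mset (path_monomial v w ps) = (\<lambda>n. v (w ! n) (ps ! n) (ps ! Suc n)) ` {..<length w}"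
  unfolding path_monomial_def by auto

lemma closed_path_two_variables:
  assumes v: "var_assignment k v" and ps: "ps \<in> word_paths k w a a"
    and vars: "set_mset (path_monomial v w ps) = {i, j}" and "i \<noteq> j"
  shows "{i, j} = {v False a a, v True a a} \<or>
         (\<exists>\<alpha> \<beta> r r'. r < k \<and> r' < k \<and> r \<noteq> a \<and> r' \<noteq> a \<and> {i, j} = {v \<alpha> a r, v \<beta> r' a})"
proof -
  have len: "length ps = Suc (length w)" and "hd ps = a" "last ps = a"
    using ps unfolding word_paths_def by auto
  note node = word_paths_nth_less[OF ps]
  have edge: "v (w ! n) (ps ! n) (ps ! Suc n) \<in> {i, j}" if "n < length w" for n
    using vars that unfolding set_mset_path_monomial by auto
  show ?thesis
  proof (cases "set ps \<subseteq> {a}")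
    case True
    have at_a: "ps ! n = a" if "n \<le> length w" for n
    proof -
      have "ps ! n \<in> set ps" using that len by simp
      with True have "ps ! n \<in> {a}" by (rule subsetD)
      then show ?thesis by simp
    qed
    have "x \<in> {v False a a, v True a a}" if x: "x \<in> {i, j}" for x
    proof -
      have "x \<in> (\<lambda>n. v (w ! n) (ps ! n) (ps ! Suc n)) ` {..<length w}"
        using x vars unfolding set_mset_path_monomial by simp
      then obtain n where "n < length w" "x = v (w ! n) (ps ! n) (ps ! Suc n)"
        by blast
      then show ?thesis using at_a by (cases "w ! n") auto
    qed
    then have "{v False a a, v True a a} = {i, j}"
      using \<open>i \<noteq> j\<close> by (intro doubleton_eq_of_mem) auto
    then show ?thesis by simp
  next
    case False
    then obtain x where "x \<in> set ps" "x \<noteq> a" by auto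
    obtain n\<^sub>1 where n\<^sub>1: "Suc n\<^sub>1 < length ps" "ps ! n\<^sub>1 = a" "ps ! Suc n\<^sub>1 \<noteq> a"
      using list_departure[OF \<open>hd ps = a\<close> \<open>x \<in> set ps\<close> \<open>x \<noteq> a\<close>] by blast
    obtain n\<^sub>2 where n\<^sub>2: "Suc n\<^sub>2 < length ps" "ps ! n\<^sub>2 \<noteq> a" "ps ! Suc n\<^sub>2 = a"
      using list_arrival[OF \<open>last ps = a\<close> \<open>x \<in> set ps\<close> \<open>x \<noteq> a\<close>] by blast
    have k: "a < k" "ps ! Suc n\<^sub>1 < k" "ps ! n\<^sub>2 < k"
      using node[of n\<^sub>1] node[of "Suc n\<^sub>1"] node[of n\<^sub>2] n\<^sub>1 n\<^sub>2 len by auto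
    have "v (w ! n\<^sub>1) a (ps ! Suc n\<^sub>1) \<in> {i, j}" "v (w ! n\<^sub>2) (ps ! n\<^sub>2) a \<in> {i, j}"
      using edge[of n\<^sub>1] edge[of n\<^sub>2] n\<^sub>1 n\<^sub>2 len by auto
    moreover have "v (w ! n\<^sub>1) a (ps ! Suc n\<^sub>1) \<noteq> v (w ! n\<^sub>2) (ps ! n\<^sub>2) a"
      using var_assignment_eq_iff[OF v] k n\<^sub>2(2) by simp
    ultimately have "{i, j} = {v (w ! n\<^sub>1) a (ps ! Suc n\<^sub>1), v (w ! n\<^sub>2) (ps ! n\<^sub>2) a}"
      by (rule doubleton_eq_of_mem)
    with k n\<^sub>1(3) n\<^sub>2(2) show ?thesis by blast
  qed
qed

lemma nc_entry_nonzero_obtain_path: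
  assumes "nc_entry k v c a b \<mu> \<noteq> 0"
  obtains w ps where "ps \<in> word_paths k w a b" "path_monomial v w ps = \<mu>"
proof -
  obtain w where "c w * real (card {ps \<in> word_paths k w a b. path_monomial v w ps = \<mu>}) \<noteq> 0"
    using assms unfolding nc_entry_def by (rule sum.not_neutral_contains_not_neutral)
  then have "{ps \<in> word_paths k w a b. path_monomial v w ps = \<mu>} \<noteq> {}"
    by (metis card.empty mult_zero_right of_nat_0)
  with that show ?thesis by blast
qed

lemma set_mset_two_letter:
  "0 < s \<Longrightarrow> 0 < t \<Longrightarrow> set_mset (two_letter s t i j) = {i, j}"
  unfolding two_letter_def by auto

lemma image_mset_two_letter:
  "image_mset f (two_letter s t i j) = two_letter s t (f i) (f j)"
  unfolding two_letter_def by simp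

definition two_letter_terms :: "nat \<Rightarrow> (nat \<Rightarrow> cpoly) \<Rightarrow> nat \<Rightarrow> nat \<Rightarrow> real \<Rightarrow> (nat \<times> nat multiset) set" where
  "two_letter_terms k P s t e =
     {(l, \<mu>). l < k^2 \<and> (\<exists>i j. i \<noteq> j \<and> \<mu> = two_letter s t i j) \<and> P l \<mu> = e}"

lemma two_letter_term_permute:
  assumes rep: "nc_representation k P c v \<sigma>" and \<pi>: "\<pi> permutes {..<k}"
    and "a < k" "b < k" "i \<noteq> j" and e: "P (\<sigma> (a, b)) (two_letter s t i j) = e"
  shows "(\<sigma> (\<pi> a, \<pi> b), two_letter s t (var_relabel k v \<pi> i) (var_relabel k v \<pi> j))
           \<in> two_letter_terms k P s t e"
proof -
  have v: "var_assignment k v" and \<sigma>: "bij_betw \<sigma> ({..<k} \<times> {..<k}) {..<k^2}"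
    and P: "\<And>i j. i < k \<Longrightarrow> j < k \<Longrightarrow> P (\<sigma> (i, j)) = nc_entry k v c i j"
    using rep unfolding nc_representation_def by auto
  have \<pi>ab: "\<pi> a < k" "\<pi> b < k"
    using assms(3,4) permutes_in_image[OF \<pi>] by auto
  have "inj (var_relabel k v \<pi>)"
    by (metis injI var_relabel_inv[OF v \<pi>])
  then have "var_relabel k v \<pi> i \<noteq> var_relabel k v \<pi> j"
    using \<open>i \<noteq> j\<close> by (meson injD)
  moreover have "\<sigma> (\<pi> a, \<pi> b) < k^2"
    using \<sigma> \<pi>ab unfolding bij_betw_def by auto
  moreover have "P (\<sigma> (\<pi> a, \<pi> b)) (two_letter s t (var_relabel k v \<pi> i) (var_relabel k v \<pi> j)) = e"
    using nc_entry_permute[OF v \<pi>, of c a b "two_letter s t i j"] e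
    by (simp add: P \<pi>ab assms(3,4) image_mset_two_letter)
  ultimately show ?thesis
    unfolding two_letter_terms_def by blast
qed

definition off_diagonal :: "nat \<Rightarrow> (nat \<times> nat) set" where
  "off_diagonal k = {(a, b). a < k \<and> b < k \<and> a \<noteq> b}"

lemma card_off_diagonal: "card (off_diagonal k) = k * k - k"
proof -
  have "off_diagonal k = {..<k} \<times> {..<k} - (\<lambda>a. (a, a)) ` {..<k}"
    unfolding off_diagonal_def by auto
  moreover have "card ((\<lambda>a. (a, a)) ` {..<k}) = k"
    by (subst card_image) (auto simp: inj_on_def)
  ultimately show ?thesis
    by (simp add: card_Diff_subset card_cartesian_product image_subset_iff)
qed

lemma off_diagonal_not_inj_into_card:
  assumes "3 \<le> k" "card T = k" "f ` off_diagonal k \<subseteq> T"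
  shows "\<not> inj_on f (off_diagonal k)"
proof
  assume "inj_on f (off_diagonal k)"
  moreover have "finite T" using assms(1,2) card.infinite by fastforce
  ultimately have "k * k - k \<le> k"
    using card_inj_on_le[OF _ assms(3)] assms(2) by (simp add: card_off_diagonal)
  moreover have "3 * k \<le> k * k" using assms(1) by simp
  ultimately show False using assms(1) by linarith
qed

lemma off_diagonal_obtain_permutes:
  assumes "a < k" "b < k" "a \<noteq> b"
  obtains \<pi> where "\<And>p. p \<in> off_diagonal k \<Longrightarrow> \<pi> p permutes {..<k} \<and> \<pi> p a = fst p \<and> \<pi> p b = snd p"
proof -
  have "\<forall>p\<in>off_diagonal k. \<exists>\<pi>. \<pi> permutes {..<k} \<and> \<pi> a = fst p \<and> \<pi> b = snd p"
    using assms unfolding off_diagonal_def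
    by (auto intro: permutes_two_points[of a "{..<k}" b, simplified])
  with that show ?thesis by metis
qed

lemma not_inj_on_two_letter_orbit:
  assumes rep: "nc_representation k P c v \<sigma>" and "3 \<le> k"
    and card: "card (two_letter_terms k P s t e) = k" and "0 < s" "0 < t"
    and "a < k" "b < k" "i \<noteq> j" and e: "P (\<sigma> (a, b)) (two_letter s t i j) = e"
    and \<pi>: "\<And>p. p \<in> off_diagonal k \<Longrightarrow> \<pi> p permutes {..<k}"
  shows "\<not> inj_on (\<lambda>p. (\<sigma> (\<pi> p a, \<pi> p b), var_relabel k v (\<pi> p) ` {i, j})) (off_diagonal k)"
proof
  assume inj: "inj_on (\<lambda>p. (\<sigma> (\<pi> p a, \<pi> p b), var_relabel k v (\<pi> p) ` {i, j})) (off_diagonal k)"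
  define f where "f p = (\<sigma> (\<pi> p a, \<pi> p b),
    two_letter s t (var_relabel k v (\<pi> p) i) (var_relabel k v (\<pi> p) j))" for p
  have "f ` off_diagonal k \<subseteq> two_letter_terms k P s t e"
    using two_letter_term_permute[OF rep \<pi> assms(6-8) e] unfolding f_def by blast
  moreover have "inj_on (map_prod id set_mset \<circ> f) (off_diagonal k)"
    using inj by (simp add: f_def o_def set_mset_two_letter[OF assms(4,5)])
  then have "inj_on f (off_diagonal k)"
    by (rule inj_on_imageI2)
  ultimately show False
    using off_diagonal_not_inj_into_card[OF assms(2) card] by blast
qed

lemma two_letter_term_on_diagonal:
  assumes rep: "nc_representation k P c v \<sigma>" and "3 \<le> k"
    and "card (two_letter_terms k P s t e) = k" and "0 < s" "0 < t"
    and "a < k" "b < k" "i \<noteq> j" and "P (\<sigma> (a, b)) (two_letter s t i j) = e"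
  shows "a = b"
proof (rule ccontr)
  assume "a \<noteq> b"
  obtain \<pi> where \<pi>: "\<And>p. p \<in> off_diagonal k \<Longrightarrow>
      \<pi> p permutes {..<k} \<and> \<pi> p a = fst p \<and> \<pi> p b = snd p"
    using off_diagonal_obtain_permutes[OF assms(6,7) \<open>a \<noteq> b\<close>] by blast
  have "inj_on \<sigma> (off_diagonal k)"
    using rep unfolding nc_representation_def off_diagonal_def
    by (auto dest: bij_betw_imp_inj_on intro: inj_on_subset)
  then have "inj_on (\<lambda>p. \<sigma> (\<pi> p a, \<pi> p b)) (off_diagonal k)"
    by (rule inj_on_cong[THEN iffD1, rotated]) (simp add: \<pi>)
  then have "inj_on (\<lambda>p. (\<sigma> (\<pi> p a, \<pi> p b), var_relabel k v (\<pi> p) ` {i, j})) (off_diagonal k)"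
    by (auto simp: inj_on_def)
  moreover have "\<not> ?this"
    using not_inj_on_two_letter_orbit[OF assms(1-9)] \<pi> by blast
  ultimately show False by contradiction
qed

lemma diagonal_two_letter_term_not_leaving:
  assumes rep: "nc_representation k P c v \<sigma>" and "3 \<le> k"
    and "card (two_letter_terms k P s t e) = k" and "0 < s" "0 < t"
    and "a < k" "r < k" "r' < k" "r \<noteq> a" "r' \<noteq> a"
    and "P (\<sigma> (a, a)) (two_letter s t i j) = e"
  shows "{i, j} \<noteq> {v \<alpha> a r, v \<beta> r' a}"
proof
  assume ij: "{i, j} = {v \<alpha> a r, v \<beta> r' a}"
  have v: "var_assignment k v" and \<sigma>: "inj_on \<sigma> ({..<k} \<times> {..<k})"
    using rep unfolding nc_representation_def by (auto dest: bij_betw_imp_inj_on)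
  have "i \<noteq> j"
    using ij assms(6-8,10) var_assignment_eq_iff[OF v] by (metis doubleton_eq_iff)
  obtain \<pi> where \<pi>: "\<And>p. p \<in> off_diagonal k \<Longrightarrow>
      \<pi> p permutes {..<k} \<and> \<pi> p a = fst p \<and> \<pi> p r = snd p"
    using off_diagonal_obtain_permutes[OF assms(6,7) assms(9)[symmetric]] by blast
  \<comment> \<open>The relabelled departure variable is the one in row \<open>\<pi> a\<close>; its column recovers \<open>\<pi> r\<close>.\<close>
  have "inj_on (\<lambda>p. (\<sigma> (\<pi> p a, \<pi> p a), var_relabel k v (\<pi> p) ` {i, j})) (off_diagonal k)"
  proof (rule inj_onI, clarify)
    fix a1 r1 a2 r2
    assume p1: "(a1, r1) \<in> off_diagonal k" and p2: "(a2, r2) \<in> off_diagonal k"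
      and eq_\<sigma>: "\<sigma> (\<pi> (a1, r1) a, \<pi> (a1, r1) a) = \<sigma> (\<pi> (a2, r2) a, \<pi> (a2, r2) a)"
      and eq_vars: "var_relabel k v (\<pi> (a1, r1)) ` {i, j} = var_relabel k v (\<pi> (a2, r2)) ` {i, j}"
    let ?\<pi>\<^sub>1 = "\<pi> (a1, r1)" and ?\<pi>\<^sub>2 = "\<pi> (a2, r2)"
    have k: "a1 < k" "r1 < k" "a2 < k" "r2 < k" "?\<pi>\<^sub>2 r' < k"
      using p1 p2 \<pi>[OF p2] assms(8) permutes_in_image[of ?\<pi>\<^sub>2 "{..<k}" r']
      unfolding off_diagonal_def by auto
    have "a1 = a2"
      using eq_\<sigma> \<pi>[OF p1] \<pi>[OF p2] k \<sigma> by (auto dest: inj_onD)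
    have relabel: "var_relabel k v ?\<pi>\<^sub>1 ` {i, j} = {v \<alpha> a1 r1, v \<beta> (?\<pi>\<^sub>1 r') a1}"
      "var_relabel k v ?\<pi>\<^sub>2 ` {i, j} = {v \<alpha> a2 r2, v \<beta> (?\<pi>\<^sub>2 r') a2}"
      using \<pi>[OF p1] \<pi>[OF p2] assms(6-8) by (simp_all add: ij var_relabel_var[OF v])
    have "inj ?\<pi>\<^sub>2"
      using \<pi>[OF p2] permutes_inj by blast
    then have "?\<pi>\<^sub>2 r' \<noteq> ?\<pi>\<^sub>2 a"
      using \<open>r' \<noteq> a\<close> by (blast dest: injD)
    then have "v \<alpha> a1 r1 \<noteq> v \<beta> (?\<pi>\<^sub>2 r') a2"
      using \<pi>[OF p2] var_assignment_eq_iff[OF v] k \<open>a1 = a2\<close> by simp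
    moreover have "v \<alpha> a1 r1 \<in> {v \<alpha> a2 r2, v \<beta> (?\<pi>\<^sub>2 r') a2}"
      using eq_vars relabel by (metis insertI1)
    ultimately have "v \<alpha> a1 r1 = v \<alpha> a2 r2"
      by simp
    then show "a1 = a2 \<and> r1 = r2"
      using var_assignment_eq_iff[OF v] k by simp
  qed
  moreover have "\<not> ?this"
    using not_inj_on_two_letter_orbit[OF assms(1-6) assms(6) \<open>i \<noteq> j\<close> assms(11)] \<pi> by blast
  ultimately show False by contradiction
qed

lemma two_letter_term_position:
  assumes rep: "nc_representation k P c v \<sigma>" and "3 \<le> k"
    and card: "card (two_letter_terms k P s t e) = k" and "0 < s" "0 < t" and "e \<noteq> 0"
    and "a < k" "b < k" "i \<noteq> j" and e: "P (\<sigma> (a, b)) (two_letter s t i j) = e"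
  shows "a = b \<and> {i, j} = {v False a a, v True a a}"
proof -
  have v: "var_assignment k v" and "P (\<sigma> (a, b)) = nc_entry k v c a b"
    using rep assms(7,8) unfolding nc_representation_def by auto
  with e \<open>e \<noteq> 0\<close> have "nc_entry k v c a b (two_letter s t i j) \<noteq> 0"
    by simp
  then obtain w ps where ps: "ps \<in> word_paths k w a b" and "path_monomial v w ps = two_letter s t i j"
    by (rule nc_entry_nonzero_obtain_path)
  then have vars: "set_mset (path_monomial v w ps) = {i, j}"
    using set_mset_two_letter[OF \<open>0 < s\<close> \<open>0 < t\<close>] by simp
  have "a = b"
    by (rule two_letter_term_on_diagonal[OF rep \<open>3 \<le> k\<close> card assms(4,5,7-10)])
  moreover have "\<not> {i, j} = {v \<alpha> a r, v \<beta> r' a}" if "r < k" "r' < k" "r \<noteq> a" "r' \<noteq> a" for \<alpha> \<beta> r r'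
    using diagonal_two_letter_term_not_leaving[OF rep \<open>3 \<le> k\<close> card assms(4,5,7) that] e \<open>a = b\<close>
    by simp
  ultimately show ?thesis
    using closed_path_two_variables[OF v _ vars \<open>i \<noteq> j\<close>] ps by blast
qed

theorem lemma2p17:
  fixes k d s t :: nat and e :: real
    and P :: "nat \<Rightarrow> nat multiset \<Rightarrow> real" and c :: "bool list \<Rightarrow> real"
    and v :: "bool \<Rightarrow> nat \<Rightarrow> nat \<Rightarrow> nat" and \<sigma> :: "nat \<times> nat \<Rightarrow> nat"
  assumes "k \<ge> 3"
    and "nc_representation k P c v \<sigma>"
    and "nc_degree c = d" and "d > 1"
    and "t \<ge> 2" and "s = t \<or> s = t + 1"
    and "e \<noteq> 0"
    and "card {(l, \<mu>). l < k^2 \<and> (\<exists>i j. i \<noteq> j \<and> \<mu> = two_letter s t i j) \<and> P l \<mu> = e} = k"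
  shows "\<forall>l i j. l < k^2 \<and> i \<noteq> j \<and> P l (two_letter s t i j) = e \<longrightarrow>
           (\<exists>a<k. {i, j} = {v False a a, v True a a} \<and> \<sigma> (a, a) = l)"
proof (intro allI impI, elim conjE)
  fix l i j
  assume "l < k^2" "i \<noteq> j" and e: "P l (two_letter s t i j) = e"
  have "0 < s" "0 < t"
    using assms(5,6) by auto
  have card: "card (two_letter_terms k P s t e) = k"
    using assms(8) unfolding two_letter_terms_def .
  have "l \<in> \<sigma> ` ({..<k} \<times> {..<k})"
    using assms(2) \<open>l < k^2\<close> unfolding nc_representation_def bij_betw_def by simp
  then obtain a b where ab: "a < k" "b < k" "\<sigma> (a, b) = l"
    by auto
  with two_letter_term_position[OF assms(2,1) card \<open>0 < s\<close> \<open>0 < t\<close> assms(7) ab(1,2) \<open>i \<noteq> j\<close>] e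
  show "\<exists>a<k. {i, j} = {v False a a, v True a a} \<and> \<sigma> (a, a) = l"
    by auto
qed

end
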